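(* Let $N_1,N_2,N_3,L_1,L_2,L_3\ge1$ be dyadic, let $A\ge2^{25}$ be dyadic and let $j_1,j_2\in\{0,\dots,A-1\}$ with $|j_1-j_2|\le32$. Let $\lambda_\iota=(\tau_\iota,\xi_\iota,\eta_\iota)\in G_{N_\iota,L_\iota}\cap\tilde{\mathcal D}^A_{j_\iota}$ for $\iota=1,2$, with $\lambda_1+\lambda_2\in G_{N_3,L_3}$, and set $(\xi_3,\eta_3)=-(\xi_1+\xi_2,\eta_1+\eta_2)$. Assume $((\xi_1,\eta_1),(\xi_2,\eta_2))\notin\mathcal I_1$, and assume Case 1.1: $N_1\sim N_2\gg N_3$ and $|\xi_1|\sim|\eta_1|\sim|\xi_2|\sim|\eta_2|\sim N_1\gg|\xi_3|\sim|\eta_3|$. If $\max_{1\le\iota\le3}L_\iota\lesssim A^{-1}N_1^3$, then $N_3\lesssim A^{-1}N_1$.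
   Context: $G_{N,L}=\{(\tau,\xi,\eta):N/2<|(\xi,\eta)|<2N,\ L/2<|\tau-\xi^3-\eta^3|<2L\}$. Angular sectors: for dyadic $A$ and $j\in\{0,\dots,A-1\}$, $\Theta^A_j=[\frac{\pi}{A}(j-2),\frac\pi A(j+2)]\cup[-\pi+\frac\pi A(j-2),-\pi+\frac\pi A(j+2)]$, $\mathcal D^A_j=\{r(\cos\theta,\sin\theta):r\ge0,\ \theta\in\Theta^A_j\}\subset\mathbb{R}^2$, $\tilde{\mathcal D}^A_j=\mathbb{R}\times\mathcal D^A_j$. $\mathcal I_1=\mathcal D^{2^{11}}_{3\cdot2^9}\times\mathcal D^{2^{11}}_{3\cdot 2^9}\subset\mathbb{R}^2\times\mathbb{R}^2$, i.e. both vectors lie within angle $\pi/2^{10}$ of the line $\xi+\eta=0$. $A\lesssim B$ means $A\le CB$ with an absolute constant; $A\gg B$ means $A\ge CB$ for a sufficiently large absolute constant; $\sim$ means comparable with fixed absolute constants. *)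

theory Defs
  imports "HOL-Analysis.Analysis"
begin

definition dyadic :: "real \<Rightarrow> bool" where
  "dyadic x \<longleftrightarrow> (\<exists>k::int. x = 2 powr (real_of_int k))"

definition G :: "real \<Rightarrow> real \<Rightarrow> (real \<times> real \<times> real) set" where
  "G N L = {(\<tau>, \<xi>, \<eta>). N / 2 < sqrt (\<xi>\<^sup>2 + \<eta>\<^sup>2) \<and> sqrt (\<xi>\<^sup>2 + \<eta>\<^sup>2) < 2 * N
              \<and> L / 2 < \<bar>\<tau> - \<xi> ^ 3 - \<eta> ^ 3\<bar> \<and> \<bar>\<tau> - \<xi> ^ 3 - \<eta> ^ 3\<bar> < 2 * L}"

definition Theta :: "real \<Rightarrow> nat \<Rightarrow> real set" where
  "Theta A j = {pi / A * (real j - 2) .. pi / A * (real j + 2)}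
             \<union> {- pi + pi / A * (real j - 2) .. - pi + pi / A * (real j + 2)}"

definition D :: "real \<Rightarrow> nat \<Rightarrow> (real \<times> real) set" where
  "D A j = {(r * cos \<theta>, r * sin \<theta>) | r \<theta>. r \<ge> 0 \<and> \<theta> \<in> Theta A j}"

definition Dt :: "real \<Rightarrow> nat \<Rightarrow> (real \<times> real \<times> real) set" where
  "Dt A j = UNIV \<times> D A j"

definition I1 :: "((real \<times> real) \<times> (real \<times> real)) set" where
  "I1 = D (2 ^ 11) (3 * 2 ^ 9) \<times> D (2 ^ 11) (3 * 2 ^ 9)"

end

theory Submission
  imports Defs
begin

text \<open>
  By the modulation bounds the resonance
  \<open>\<xi>1 \<xi>2 (\<xi>1 + \<xi>2) + \<eta>1 \<eta>2 (\<eta>1 + \<eta>2)\<close> is \<open>O(K N1\<^sup>3 / A)\<close>.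
  With \<open>w = (\<xi>1 + \<xi>2, \<eta>1 + \<eta>2)\<close> it equals
  \<open>(\<xi>1 w1\<^sup>2 + \<eta>1 w2\<^sup>2) - (\<xi>1\<^sup>2 w1 + \<eta>1\<^sup>2 w2)\<close>; the first term is \<open>O(N1 N3\<^sup>2)\<close>.
  Both inputs lie in sectors of width \<open>O(1/A)\<close>, so \<open>w\<close> is parallel to \<open>(\<xi>1, \<eta>1)\<close>
  up to \<open>O(N1 / A)\<close>, and since the pair is not in \<open>I1\<close> the direction of \<open>(\<xi>1, \<eta>1)\<close>
  stays away from the antidiagonal, where \<open>cos\<^sup>3 + sin\<^sup>3\<close> vanishes. Hence the second term
  is at least of order \<open>N1\<^sup>2 (N3 - O(N1 / A))\<close>, and comparing the two sides gives
  \<open>N3 = O(N1 / A)\<close>.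
\<close>

definition resonance :: "real \<Rightarrow> real \<Rightarrow> real \<Rightarrow> real \<Rightarrow> real" where
  "resonance \<xi>1 \<eta>1 \<xi>2 \<eta>2 = \<xi>1 * \<xi>2 * (\<xi>1 + \<xi>2) + \<eta>1 * \<eta>2 * (\<eta>1 + \<eta>2)"

lemma abs_resonance_less_modulations:
  assumes "(\<tau>1, \<xi>1, \<eta>1) \<in> G N1 L1" "(\<tau>2, \<xi>2, \<eta>2) \<in> G N2 L2"
    and "(\<tau>1 + \<tau>2, \<xi>1 + \<xi>2, \<eta>1 + \<eta>2) \<in> G N3 L3"
  shows "\<bar>resonance \<xi>1 \<eta>1 \<xi>2 \<eta>2\<bar> < 2 * Max {L1, L2, L3}"
proof -
  have "3 * resonance \<xi>1 \<eta>1 \<xi>2 \<eta>2 =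
      (\<tau>1 - \<xi>1 ^ 3 - \<eta>1 ^ 3) + (\<tau>2 - \<xi>2 ^ 3 - \<eta>2 ^ 3)
      - ((\<tau>1 + \<tau>2) - (\<xi>1 + \<xi>2) ^ 3 - (\<eta>1 + \<eta>2) ^ 3)"
    by (simp add: resonance_def algebra_simps power3_eq_cube)
  then have "3 * \<bar>resonance \<xi>1 \<eta>1 \<xi>2 \<eta>2\<bar> < 2 * L1 + 2 * L2 + 2 * L3"
    using assms unfolding G_def by auto
  moreover have "L1 \<le> Max {L1, L2, L3}" "L2 \<le> Max {L1, L2, L3}" "L3 \<le> Max {L1, L2, L3}" by auto
  ultimately show ?thesis by linarith
qed

lemma resonance_eq:
  "resonance \<xi>1 \<eta>1 \<xi>2 \<eta>2 = \<xi>1 * (\<xi>1 + \<xi>2)\<^sup>2 + \<eta>1 * (\<eta>1 + \<eta>2)\<^sup>2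
     - (\<xi>1\<^sup>2 * (\<xi>1 + \<xi>2) + \<eta>1\<^sup>2 * (\<eta>1 + \<eta>2))"
  by (simp add: resonance_def algebra_simps power2_eq_square)

lemma mem_D_iff:
  "(x, y) \<in> D A j \<longleftrightarrow>
     (\<exists>s \<phi>. x = s * cos \<phi> \<and> y = s * sin \<phi> \<and> \<phi> \<in> {pi / A * (real j - 2) .. pi / A * (real j + 2)})"
  (is "_ \<longleftrightarrow> (\<exists>s \<phi>. _ \<and> _ \<and> \<phi> \<in> ?I)")
proof
  assume "(x, y) \<in> D A j"
  then obtain r \<theta> where r: "x = r * cos \<theta>" "y = r * sin \<theta>" "\<theta> \<in> Theta A j"
    unfolding D_def by auto
  show "\<exists>s \<phi>. x = s * cos \<phi> \<and> y = s * sin \<phi> \<and> \<phi> \<in> ?I"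
  proof (cases "\<theta> \<in> ?I")
    case False
    then have "\<theta> + pi \<in> ?I" using r(3) unfolding Theta_def by auto
    with r show ?thesis by (intro exI[of _ "-r"] exI[of _ "\<theta> + pi"]) auto
  qed (use r in auto)
next
  assume "\<exists>s \<phi>. x = s * cos \<phi> \<and> y = s * sin \<phi> \<and> \<phi> \<in> ?I"
  then obtain s \<phi> where s: "x = s * cos \<phi>" "y = s * sin \<phi>" "\<phi> \<in> ?I" by blast
  show "(x, y) \<in> D A j"
  proof (cases "s \<ge> 0")
    case True
    with s show ?thesis unfolding D_def Theta_def by blast
  next
    case False
    have "\<phi> - pi \<in> Theta A j" using s(3) unfolding Theta_def by auto
    moreover have "x = (-s) * cos (\<phi> - pi)" "y = (-s) * sin (\<phi> - pi)" using s by auto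
    ultimately show ?thesis using False unfolding D_def
      by (intro CollectI exI[of _ "-s"] exI[of _ "\<phi> - pi"]) auto
  qed
qed

lemma sector_angle_range:
  assumes "0 < A" "real j < A" "\<phi> \<in> {pi / A * (real j - 2) .. pi / A * (real j + 2)}"
  shows "- 2 * pi / A \<le> \<phi>" "\<phi> \<le> pi + 2 * pi / A"
proof -
  have "pi / A * (real j - 2) \<ge> pi / A * (- 2)" by (rule mult_left_mono) (use assms in auto)
  then show "- 2 * pi / A \<le> \<phi>" using assms(3) by auto
  have "pi / A * (real j + 2) \<le> pi / A * (A + 2)" by (rule mult_left_mono) (use assms in auto)
  also have "\<dots> = pi + 2 * pi / A" using assms(1) by (simp add: field_simps)
  finally show "\<phi> \<le> pi + 2 * pi / A" using assms(3) by auto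
qed

lemma sector_angle_dist:
  assumes "0 < A" "\<bar>real j1 - real j2\<bar> \<le> m"
    and "\<phi>1 \<in> {pi / A * (real j1 - 2) .. pi / A * (real j1 + 2)}"
    and "\<phi>2 \<in> {pi / A * (real j2 - 2) .. pi / A * (real j2 + 2)}"
  shows "\<bar>\<phi>2 - \<phi>1\<bar> \<le> pi / A * (m + 4)"
proof -
  define d where "d = pi / A"
  have "0 \<le> d" using assms(1) by (simp add: d_def)
  have "\<bar>\<phi>2 - \<phi>1\<bar> \<le> \<bar>d * real j1 - d * real j2\<bar> + 4 * d"
    using assms(3,4) unfolding d_def[symmetric] atLeastAtMost_iff ring_distribs abs_le_iff by auto
  also have "\<bar>d * real j1 - d * real j2\<bar> = d * \<bar>real j1 - real j2\<bar>"
    unfolding right_diff_distrib[symmetric] abs_mult using \<open>0 \<le> d\<close> by simp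
  also have "d * \<bar>real j1 - real j2\<bar> + 4 * d \<le> d * (m + 4)"
    using mult_left_mono[OF assms(2) \<open>0 \<le> d\<close>] by (simp add: algebra_simps)
  finally show ?thesis unfolding d_def .
qed

lemma sin_ge_sin_margin:
  assumes "0 \<le> \<delta>" "\<delta> \<le> x" "x \<le> pi - \<delta>"
  shows "sin \<delta> \<le> sin x"
proof (cases "x \<le> pi / 2")
  case True
  then show ?thesis using assms by (intro sin_monotone_2pi_le) auto
next
  case False
  then have "sin \<delta> \<le> sin (pi - x)" using assms by (intro sin_monotone_2pi_le) auto
  then show ?thesis by simp
qed

lemma abs_cos_plus_sin_ge:
  assumes "0 \<le> \<delta>" "\<delta> - pi / 4 \<le> \<phi>" "\<phi> \<le> 7 * pi / 4 - \<delta>" "\<delta> \<le> \<bar>\<phi> - 3 * pi / 4\<bar>"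
  shows "sin \<delta> \<le> \<bar>cos \<phi> + sin \<phi>\<bar>"
proof -
  define x where "x = \<phi> + pi / 4"
  have "cos \<phi> + sin \<phi> = sqrt 2 * sin x"
    unfolding x_def by (simp add: sin_add cos_45 sin_45 algebra_simps)
  moreover have "sin \<delta> \<le> \<bar>sin x\<bar>"
  proof (cases "x \<le> pi")
    case True
    then have "sin \<delta> \<le> sin x" using assms by (intro sin_ge_sin_margin) (auto simp: x_def)
    then show ?thesis by linarith
  next
    case False
    then have "sin \<delta> \<le> sin (x - pi)" using assms by (intro sin_ge_sin_margin) (auto simp: x_def)
    then show ?thesis by simp
  qed
  moreover have "\<bar>sin x\<bar> \<le> sqrt 2 * \<bar>sin x\<bar>" by (simp add: mult_le_cancel_right1)
  ultimately show ?thesis by (simp add: abs_mult)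
qed

lemma cubic_form_frame:
  fixes co si w1 w2 :: real
  defines "a \<equiv> w1 * co + w2 * si" and "b \<equiv> w2 * co - w1 * si"
  assumes unit: "co\<^sup>2 + si\<^sup>2 = 1"
  shows "co\<^sup>2 * w1 + si\<^sup>2 * w2 = a * ((co + si) * (1 - co * si)) + b * (co * si * (si - co))"
    and "w1\<^sup>2 + w2\<^sup>2 = a\<^sup>2 + b\<^sup>2"
proof -
  have "co\<^sup>2 * w1 + si\<^sup>2 * w2 = (co\<^sup>2 * w1 + si\<^sup>2 * w2) * (co\<^sup>2 + si\<^sup>2)" by (simp add: unit)
  also have "\<dots> = a * ((co + si) * (1 - co * si)) + b * (co * si * (si - co))"
    unfolding a_def b_def unit[symmetric] by (simp add: algebra_simps power2_eq_square)
  finally show "co\<^sup>2 * w1 + si\<^sup>2 * w2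
      = a * ((co + si) * (1 - co * si)) + b * (co * si * (si - co))" .
  have "a\<^sup>2 + b\<^sup>2 = (w1\<^sup>2 + w2\<^sup>2) * (co\<^sup>2 + si\<^sup>2)"
    unfolding a_def b_def by (simp add: algebra_simps power2_eq_square)
  then show "w1\<^sup>2 + w2\<^sup>2 = a\<^sup>2 + b\<^sup>2" by (simp add: unit)
qed

lemma cubic_form_transversal:
  fixes \<phi> w1 w2 \<epsilon> :: real
  defines "b \<equiv> w2 * cos \<phi> - w1 * sin \<phi>"
  assumes "0 \<le> \<epsilon>" "\<epsilon> \<le> \<bar>cos \<phi> + sin \<phi>\<bar>"
  shows "\<epsilon> / 2 * (sqrt (w1\<^sup>2 + w2\<^sup>2) - \<bar>b\<bar>) - \<bar>b\<bar> \<le> \<bar>(cos \<phi>)\<^sup>2 * w1 + (sin \<phi>)\<^sup>2 * w2\<bar>"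
proof -
  define a where "a = w1 * cos \<phi> + w2 * sin \<phi>"
  define F E where "F = (cos \<phi> + sin \<phi>) * (1 - cos \<phi> * sin \<phi>)"
    and "E = cos \<phi> * sin \<phi> * (sin \<phi> - cos \<phi>)"
  note frame = cubic_form_frame[of "cos \<phi>" "sin \<phi>" w1 w2, OF sin_cos_squared_add2,
      folded a_def b_def F_def E_def]
  have cs: "\<bar>cos \<phi> * sin \<phi>\<bar> \<le> 1 / 2"
    using sum_squares_bound[of "cos \<phi>" "sin \<phi>"] sum_squares_bound[of "cos \<phi>" "- sin \<phi>"]
    by (auto simp: abs_le_iff)
  have "\<epsilon> * (1 / 2) \<le> \<bar>cos \<phi> + sin \<phi>\<bar> * \<bar>1 - cos \<phi> * sin \<phi>\<bar>"
    using assms(2,3) cs by (intro mult_mono) auto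
  then have F: "\<epsilon> / 2 \<le> \<bar>F\<bar>" by (simp add: F_def abs_mult)
  have "\<bar>sin \<phi> - cos \<phi>\<bar> \<le> 2" using abs_sin_le_one[of \<phi>] abs_cos_le_one[of \<phi>] by linarith
  then have "\<bar>cos \<phi> * sin \<phi>\<bar> * \<bar>sin \<phi> - cos \<phi>\<bar> \<le> 1 / 2 * 2" using cs by (intro mult_mono) auto
  then have "\<bar>b\<bar> * \<bar>E\<bar> \<le> \<bar>b\<bar>" by (simp add: E_def abs_mult mult_left_le)
  moreover have "w1\<^sup>2 + w2\<^sup>2 \<le> (\<bar>a\<bar> + \<bar>b\<bar>)\<^sup>2"
    unfolding frame(2) by (simp add: power2_eq_square algebra_simps)
  then have "sqrt (w1\<^sup>2 + w2\<^sup>2) \<le> \<bar>a\<bar> + \<bar>b\<bar>" by (simp add: real_le_lsqrt)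
  then have "\<epsilon> / 2 * (sqrt (w1\<^sup>2 + w2\<^sup>2) - \<bar>b\<bar>) \<le> \<epsilon> / 2 * \<bar>a\<bar>"
    using assms(2) by (intro mult_left_mono) auto
  moreover have "\<epsilon> / 2 * \<bar>a\<bar> \<le> \<bar>a\<bar> * \<bar>F\<bar>"
    using mult_left_mono[OF F, of "\<bar>a\<bar>"] by (simp add: mult.commute)
  moreover have "\<bar>a\<bar> * \<bar>F\<bar> - \<bar>b\<bar> * \<bar>E\<bar> \<le> \<bar>a * F + b * E\<bar>"
    unfolding abs_mult[symmetric] by linarith
  ultimately show ?thesis
    unfolding frame(1) by linarith
qed

lemma abs_resonance_polar_ge:
  fixes s \<phi> \<xi>2 \<eta>2 \<epsilon> B :: real
  defines "w1 \<equiv> s * cos \<phi> + \<xi>2" and "w2 \<equiv> s * sin \<phi> + \<eta>2"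
  defines "W \<equiv> sqrt (w1\<^sup>2 + w2\<^sup>2)"
  assumes \<epsilon>: "0 \<le> \<epsilon>" "\<epsilon> \<le> \<bar>cos \<phi> + sin \<phi>\<bar>"
    and B: "\<bar>w2 * cos \<phi> - w1 * sin \<phi>\<bar> \<le> B"
  shows "s\<^sup>2 * (\<epsilon> / 2 * (W - B) - B) \<le> \<bar>resonance (s * cos \<phi>) (s * sin \<phi>) \<xi>2 \<eta>2\<bar> + \<bar>s\<bar> * W\<^sup>2"
proof -
  define P where "P = s * cos \<phi> * w1\<^sup>2 + s * sin \<phi> * w2\<^sup>2"
  have "s\<^sup>2 * (\<epsilon> / 2 * (W - B) - B) \<le> s\<^sup>2 * \<bar>(cos \<phi>)\<^sup>2 * w1 + (sin \<phi>)\<^sup>2 * w2\<bar>"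
  proof (rule mult_left_mono)
    have "\<epsilon> / 2 * (W - B) \<le> \<epsilon> / 2 * (W - \<bar>w2 * cos \<phi> - w1 * sin \<phi>\<bar>)"
      using \<epsilon>(1) B by (intro mult_left_mono) auto
    then show "\<epsilon> / 2 * (W - B) - B \<le> \<bar>(cos \<phi>)\<^sup>2 * w1 + (sin \<phi>)\<^sup>2 * w2\<bar>"
      using cubic_form_transversal[OF \<epsilon>, of w1 w2] B unfolding W_def by linarith
  qed simp
  also have "\<dots> \<le> \<bar>resonance (s * cos \<phi>) (s * sin \<phi>) \<xi>2 \<eta>2\<bar> + \<bar>P\<bar>"
  proof -
    have "resonance (s * cos \<phi>) (s * sin \<phi>) \<xi>2 \<eta>2 = P - s\<^sup>2 * ((cos \<phi>)\<^sup>2 * w1 + (sin \<phi>)\<^sup>2 * w2)"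
      unfolding resonance_eq P_def w1_def w2_def by (simp add: power_mult_distrib algebra_simps)
    then show ?thesis by (simp add: abs_mult)
  qed
  also have "\<bar>P\<bar> \<le> \<bar>s\<bar> * \<bar>cos \<phi>\<bar> * w1\<^sup>2 + \<bar>s\<bar> * \<bar>sin \<phi>\<bar> * w2\<^sup>2"
    unfolding P_def using abs_triangle_ineq[of "s * cos \<phi> * w1\<^sup>2" "s * sin \<phi> * w2\<^sup>2"]
    by (simp add: abs_mult)
  also have "\<dots> \<le> \<bar>s\<bar> * 1 * w1\<^sup>2 + \<bar>s\<bar> * 1 * w2\<^sup>2"
    by (intro add_mono mult_right_mono mult_left_mono) auto
  finally show ?thesis by (simp add: W_def distrib_left)
qed

lemma output_size_le:
  fixes s \<phi> \<xi>2 \<eta>2 \<epsilon> H B N1 N3 :: real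
  defines "w1 \<equiv> s * cos \<phi> + \<xi>2" and "w2 \<equiv> s * sin \<phi> + \<eta>2"
  assumes \<epsilon>: "0 \<le> \<epsilon>" "\<epsilon> \<le> \<bar>cos \<phi> + sin \<phi>\<bar>" and s: "N1 / 2 < \<bar>s\<bar>"
    and w: "N3 / 2 < sqrt (w1\<^sup>2 + w2\<^sup>2)" "sqrt (w1\<^sup>2 + w2\<^sup>2) < 2 * N3"
    and B: "\<bar>w2 * cos \<phi> - w1 * sin \<phi>\<bar> \<le> B"
    and H: "\<bar>resonance (s * cos \<phi>) (s * sin \<phi>) \<xi>2 \<eta>2\<bar> \<le> H"
    and small: "16 * N3 \<le> \<epsilon> * N1"
  shows "\<epsilon> * N3 \<le> 8 * (4 * H / N1\<^sup>2 + 2 * B)"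
proof -
  define W where "W = sqrt (w1\<^sup>2 + w2\<^sup>2)"
  define h where "h = 4 * H / N1\<^sup>2"
  have "0 \<le> W" by (simp add: W_def)
  then have "0 < N3" using w(2) W_def by linarith
  then have "0 < \<epsilon> * N1" using small by linarith
  then have "0 < \<epsilon>" "0 < N1" using \<epsilon>(1) by (auto simp: zero_less_mult_iff)
  have "s\<^sup>2 * (\<epsilon> / 2 * (W - B) - B) \<le> H + \<bar>s\<bar> * W\<^sup>2"
    using abs_resonance_polar_ge[OF \<epsilon> B[unfolded w1_def w2_def]] H
    unfolding W_def w1_def w2_def by linarith
  also have "H \<le> s\<^sup>2 * h"
  proof -
    have "(N1 / 2)\<^sup>2 \<le> s\<^sup>2"
      using s \<open>0 < N1\<close> by (metis abs_le_square_iff less_imp_le abs_of_pos half_gt_zero)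
    then show ?thesis using \<open>0 < N1\<close> H by (simp add: h_def field_simps mult_left_mono)
  qed
  also have "\<bar>s\<bar> * W\<^sup>2 \<le> s\<^sup>2 * (\<epsilon> / 4 * W)"
  proof -
    have "W * W \<le> W * (\<epsilon> * N1 / 8)"
      using w(2) small \<open>0 \<le> W\<close> unfolding W_def by (intro mult_left_mono) auto
    then have "\<bar>s\<bar> * W\<^sup>2 \<le> \<bar>s\<bar> * W * (\<epsilon> * N1 / 8)"
      by (simp add: power2_eq_square mult_left_mono mult.assoc)
    also have "\<dots> \<le> \<bar>s\<bar> * W * (\<epsilon> * \<bar>s\<bar> / 4)"
      using s \<open>0 < \<epsilon>\<close> W_def by (intro mult_left_mono) auto
    finally show ?thesis by (simp add: power2_eq_square algebra_simps)
  qed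
  finally have "s\<^sup>2 * (\<epsilon> / 2 * (W - B) - B) \<le> s\<^sup>2 * (h + \<epsilon> / 4 * W)"
    by (simp only: distrib_left)
  moreover have "0 < s\<^sup>2" using s \<open>0 < N1\<close> by auto
  ultimately have "\<epsilon> / 2 * (W - B) - B \<le> h + \<epsilon> / 4 * W"
    by (simp add: mult_le_cancel_left_pos)
  moreover have "\<epsilon> \<le> 2" using \<epsilon>(2) abs_sin_le_one[of \<phi>] abs_cos_le_one[of \<phi>] by linarith
  then have "B * (\<epsilon> / 2) \<le> B"
    using \<epsilon>(1) B abs_ge_zero[of "w2 * cos \<phi> - w1 * sin \<phi>"] by (intro mult_left_le) auto
  moreover have "\<epsilon> * N3 \<le> \<epsilon> * (2 * W)" using w(1) \<open>0 < \<epsilon>\<close> W_def by simp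
  ultimately show ?thesis
    unfolding h_def[symmetric] by (simp add: algebra_simps)
qed

lemma sqrt_polar [simp]: "sqrt ((s * cos \<phi>)\<^sup>2 + (s * sin \<phi>)\<^sup>2) = \<bar>s\<bar>"
  by (simp add: power_mult_distrib distrib_left[symmetric])

lemma notin_I1_angle_gap:
  assumes "((s1 * cos \<phi>1, s1 * sin \<phi>1), (s2 * cos \<phi>2, s2 * sin \<phi>2)) \<notin> I1"
    and "\<bar>\<phi>2 - \<phi>1\<bar> \<le> pi / 2048"
  shows "pi / 2048 \<le> \<bar>\<phi>1 - 3 * pi / 4\<bar>"
proof (rule ccontr)
  assume "\<not> ?thesis"
  then have near: "\<phi> \<in> {3 * pi / 4 - 2 * pi / 2048 .. 3 * pi / 4 + 2 * pi / 2048}"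
    if "\<bar>\<phi> - \<phi>1\<bar> \<le> pi / 2048" for \<phi>
    using that unfolding atLeastAtMost_iff not_le abs_le_iff abs_less_iff by (intro conjI) linarith+
  have "(s * cos \<phi>, s * sin \<phi>) \<in> D (2 ^ 11) (3 * 2 ^ 9)"
    if "\<phi> \<in> {3 * pi / 4 - 2 * pi / 2048 .. 3 * pi / 4 + 2 * pi / 2048}" for s \<phi>
    unfolding mem_D_iff using that by (intro exI[of _ s] exI[of _ \<phi>]) auto
  with near[of \<phi>1] near[of \<phi>2] assms show False unfolding I1_def by auto
qed

lemma sector_pair_polar:
  assumes A: "2 ^ 25 \<le> A" and j: "real j1 < A" "\<bar>int j1 - int j2\<bar> \<le> 32"
    and D: "(\<xi>1, \<eta>1) \<in> D A j1" "(\<xi>2, \<eta>2) \<in> D A j2"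
    and I1: "((\<xi>1, \<eta>1), (\<xi>2, \<eta>2)) \<notin> I1"
  obtains s1 \<phi>1 s2 \<phi>2
  where "\<xi>1 = s1 * cos \<phi>1" "\<eta>1 = s1 * sin \<phi>1" "\<xi>2 = s2 * cos \<phi>2" "\<eta>2 = s2 * sin \<phi>2"
    and "\<bar>\<phi>2 - \<phi>1\<bar> \<le> pi / A * 36" and "sin (pi / 2048) \<le> \<bar>cos \<phi>1 + sin \<phi>1\<bar>"
proof -
  have "0 < A" by (rule less_le_trans[OF _ A]) simp
  obtain s1 \<phi>1 s2 \<phi>2
    where polar: "\<xi>1 = s1 * cos \<phi>1" "\<eta>1 = s1 * sin \<phi>1" "\<xi>2 = s2 * cos \<phi>2" "\<eta>2 = s2 * sin \<phi>2"
    and \<phi>: "\<phi>1 \<in> {pi / A * (real j1 - 2) .. pi / A * (real j1 + 2)}"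
      "\<phi>2 \<in> {pi / A * (real j2 - 2) .. pi / A * (real j2 + 2)}"
    using D unfolding mem_D_iff by blast
  have "\<bar>real j1 - real j2\<bar> \<le> 32" using j(2) by linarith
  then have dist: "\<bar>\<phi>2 - \<phi>1\<bar> \<le> pi / A * 36"
    using sector_angle_dist[OF \<open>0 < A\<close> _ \<phi>, of 32] by simp
  moreover have "pi / A * 36 \<le> pi / 2048" using A by (simp add: field_simps)
  ultimately have "\<bar>\<phi>2 - \<phi>1\<bar> \<le> pi / 2048" by linarith
  moreover have "2 * pi / A \<le> pi / 4 - pi / 2048" using A by (simp add: field_simps)
  ultimately have "sin (pi / 2048) \<le> \<bar>cos \<phi>1 + sin \<phi>1\<bar>"
    using sector_angle_range[OF \<open>0 < A\<close> j(1) \<phi>(1)] notin_I1_angle_gap[OF I1[unfolded polar]]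
    by (intro abs_cos_plus_sin_ge) auto
  with polar dist show thesis by (rule that)
qed

lemma output_frequency_le:
  fixes c K A :: real
  defines "\<epsilon> \<equiv> sin (pi / 2048)"
  assumes g1: "(\<tau>1, \<xi>1, \<eta>1) \<in> G N1 L1 \<inter> Dt A j1" and g2: "(\<tau>2, \<xi>2, \<eta>2) \<in> G N2 L2 \<inter> Dt A j2"
    and g3: "(\<tau>1 + \<tau>2, \<xi>1 + \<xi>2, \<eta>1 + \<eta>2) \<in> G N3 L3"
    and A: "2 ^ 25 \<le> A" and j: "real j1 < A" "\<bar>int j1 - int j2\<bar> \<le> 32"
    and I1: "((\<xi>1, \<eta>1), (\<xi>2, \<eta>2)) \<notin> I1"
    and N: "N2 \<le> c * N1" "16 * c / \<epsilon> * N3 \<le> N2" "1 \<le> c"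
    and L: "Max {L1, L2, L3} \<le> K * N1 ^ 3 / A"
  shows "N3 \<le> 8 * (8 * K + 144 * pi * c) / \<epsilon> * N1 / A"
proof -
  have "0 < A" by (rule less_le_trans[OF _ A]) simp
  have "0 < \<epsilon>" unfolding \<epsilon>_def by (rule sin_gt_zero) auto
  have "0 < N1" using g1 unfolding G_def by auto
  obtain s1 \<phi>1 s2 \<phi>2
    where polar: "\<xi>1 = s1 * cos \<phi>1" "\<eta>1 = s1 * sin \<phi>1" "\<xi>2 = s2 * cos \<phi>2" "\<eta>2 = s2 * sin \<phi>2"
    and dist: "\<bar>\<phi>2 - \<phi>1\<bar> \<le> pi / A * 36" and transversal: "\<epsilon> \<le> \<bar>cos \<phi>1 + sin \<phi>1\<bar>"
    using sector_pair_polar[OF A j _ _ I1] g1 g2 unfolding Dt_def \<epsilon>_def by blast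
  \<comment> \<open>the output's component orthogonal to \<open>(\<xi>1, \<eta>1)\<close> comes from \<open>(\<xi>2, \<eta>2)\<close> alone\<close>
  have "\<bar>(\<eta>1 + \<eta>2) * cos \<phi>1 - (\<xi>1 + \<xi>2) * sin \<phi>1\<bar> = \<bar>s2\<bar> * \<bar>sin (\<phi>2 - \<phi>1)\<bar>"
    unfolding polar sin_diff abs_mult[symmetric] by (simp add: algebra_simps)
  also have "\<dots> \<le> (2 * N2) * (pi / A * 36)"
    using g2 dist abs_sin_x_le_abs_x[of "\<phi>2 - \<phi>1"] unfolding G_def polar by (intro mult_mono) auto
  also have "\<dots> \<le> (2 * (c * N1)) * (pi / A * 36)"
    using N(1) \<open>0 < A\<close> by (intro mult_right_mono) auto
  finally have B: "\<bar>(\<eta>1 + \<eta>2) * cos \<phi>1 - (\<xi>1 + \<xi>2) * sin \<phi>1\<bar> \<le> 72 * pi * c * N1 / A"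
    by (simp add: mult_ac)
  have "\<bar>resonance \<xi>1 \<eta>1 \<xi>2 \<eta>2\<bar> \<le> 2 * (K * N1 ^ 3 / A)"
    using abs_resonance_less_modulations[OF _ _ g3] g1 g2 L by fastforce
  moreover have "16 * N3 \<le> \<epsilon> * N1"
  proof -
    have "c * (16 * N3) = 16 * c / \<epsilon> * N3 * \<epsilon>" using \<open>0 < \<epsilon>\<close> by simp
    also have "\<dots> \<le> c * N1 * \<epsilon>"
      using N(1,2) \<open>0 < \<epsilon>\<close> by (intro mult_right_mono) auto
    finally show ?thesis using N(3) by (simp add: mult_ac)
  qed
  ultimately have "\<epsilon> * N3 \<le> 8 * (4 * (2 * (K * N1 ^ 3 / A)) / N1\<^sup>2 + 2 * (72 * pi * c * N1 / A))"
    using g1 g3 B \<open>0 < \<epsilon>\<close> transversal unfolding G_def polar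
    by (intro output_size_le) (auto simp: add.commute)
  then show ?thesis
    using \<open>0 < A\<close> \<open>0 < N1\<close> \<open>0 < \<epsilon>\<close> by (simp add: power2_eq_square power3_eq_cube field_simps)
qed

theorem lemma6p1:
  "\<forall>c::real. c \<ge> 1 \<longrightarrow>
   (\<exists>C0::real. C0 > 0 \<and>
   (\<forall>K::real. K > 0 \<longrightarrow>
   (\<exists>C::real. C > 0 \<and>
   (\<forall>(N1::real) (N2::real) (N3::real) (L1::real) (L2::real) (L3::real) (A::real)
      (j1::nat) (j2::nat) (\<tau>1::real) (\<xi>1::real) (\<eta>1::real) (\<tau>2::real) (\<xi>2::real) (\<eta>2::real).
     dyadic N1 \<and> dyadic N2 \<and> dyadic N3 \<and> dyadic L1 \<and> dyadic L2 \<and> dyadic L3 \<and>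
     N1 \<ge> 1 \<and> N2 \<ge> 1 \<and> N3 \<ge> 1 \<and> L1 \<ge> 1 \<and> L2 \<ge> 1 \<and> L3 \<ge> 1 \<and>
     dyadic A \<and> A \<ge> 2 ^ 25 \<and>
     real j1 < A \<and> real j2 < A \<and> \<bar>int j1 - int j2\<bar> \<le> 32 \<and>
     (\<tau>1, \<xi>1, \<eta>1) \<in> G N1 L1 \<inter> Dt A j1 \<and>
     (\<tau>2, \<xi>2, \<eta>2) \<in> G N2 L2 \<inter> Dt A j2 \<and>
     (\<tau>1 + \<tau>2, \<xi>1 + \<xi>2, \<eta>1 + \<eta>2) \<in> G N3 L3 \<and>
     ((\<xi>1, \<eta>1), (\<xi>2, \<eta>2)) \<notin> I1 \<and>
     \<comment> \<open>Case 1.1: N1 ~ N2 >> N3\<close>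
     N1 \<le> c * N2 \<and> N2 \<le> c * N1 \<and> C0 * N3 \<le> N2 \<and>
     \<comment> \<open>|xi1| ~ |eta1| ~ |xi2| ~ |eta2| ~ N1 >> |xi3| ~ |eta3|, with (xi3,eta3) = -(xi1+xi2, eta1+eta2)\<close>
     \<bar>\<xi>1\<bar> \<le> c * \<bar>\<eta>1\<bar> \<and> \<bar>\<eta>1\<bar> \<le> c * \<bar>\<xi>1\<bar> \<and>
     \<bar>\<eta>1\<bar> \<le> c * \<bar>\<xi>2\<bar> \<and> \<bar>\<xi>2\<bar> \<le> c * \<bar>\<eta>1\<bar> \<and>
     \<bar>\<xi>2\<bar> \<le> c * \<bar>\<eta>2\<bar> \<and> \<bar>\<eta>2\<bar> \<le> c * \<bar>\<xi>2\<bar> \<and>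
     \<bar>\<eta>2\<bar> \<le> c * N1 \<and> N1 \<le> c * \<bar>\<eta>2\<bar> \<and>
     C0 * \<bar>-(\<xi>1 + \<xi>2)\<bar> \<le> N1 \<and>
     \<bar>-(\<xi>1 + \<xi>2)\<bar> \<le> c * \<bar>-(\<eta>1 + \<eta>2)\<bar> \<and> \<bar>-(\<eta>1 + \<eta>2)\<bar> \<le> c * \<bar>-(\<xi>1 + \<xi>2)\<bar> \<and>
     \<comment> \<open>max L \<lesssim> A^{-1} N1^3\<close>
     Max {L1, L2, L3} \<le> K * N1 ^ 3 / A
     \<longrightarrow> N3 \<le> C * N1 / A))))"
  apply (intro allI impI)
  subgoal for c
    apply (rule exI[of _ "16 * c / sin (pi / 2048)"], intro conjI allI impI)
     apply (simp add: sin_gt_zero)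
    subgoal for K
      apply (rule exI[of _ "8 * (8 * K + 144 * pi * c) / sin (pi / 2048)"], intro conjI allI impI)
       apply (simp add: sin_gt_zero add_pos_pos)
      apply (elim conjE)
      by (rule output_frequency_le[where c = c and K = K]) assumption+
    done
  done

end
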